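(* Let $c:[0,\infty)\to[0,\infty)$ with $c(0)=0$ be such that $z(\phi)=c(\phi)/\phi$, $\phi>0$, is nonincreasing, and suppose $c$ induces an admissible transport cost $\tau$, i.e. $\tau(w)=\inf\{F^c[\psi]\mid\int_{\mathbb{R}}\psi\,dy=w\}$ for all $w\geq0$ with $\tau$ admissible. Then $$\int_0^1\sqrt{c(\phi)}\,d\phi<\infty,\qquad\text{which implies}\qquad\liminf_{\phi\searrow0}z(\phi)\phi^3=0.$$
   Context: A transport cost $\tau:[0,\infty)\to[0,\infty)$ is admissible if it is nondecreasing, concave and continuous with $\tau(0)=0$. For $c:[0,\infty)\to[0,\infty)$ and $\psi:\mathbb{R}\to\mathbb{R}$ (with locally integrable weak derivative; otherwise the energy is $+\infty$), $F^c[\psi]=\int_{\mathbb{R}}\frac12|\psi'(y)|^2+c(|\psi(y)|)\,dy$. *)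

theory Defs
  imports "HOL-Analysis.Analysis"
begin

definition test_fun :: "(real \<Rightarrow> real) \<Rightarrow> bool" where
  "test_fun \<phi> \<longleftrightarrow> (\<forall>n. (deriv ^^ n) \<phi> differentiable_on UNIV) \<and> bounded {y. \<phi> y \<noteq> 0}"

definition loc_integrable :: "(real \<Rightarrow> real) \<Rightarrow> bool" where
  "loc_integrable f \<longleftrightarrow> (\<forall>K. compact K \<longrightarrow> set_integrable lborel K f)"

definition weak_deriv :: "(real \<Rightarrow> real) \<Rightarrow> (real \<Rightarrow> real) \<Rightarrow> bool" where
  "weak_deriv \<psi> g \<longleftrightarrow> loc_integrable \<psi> \<and> loc_integrable g \<and>
     (\<forall>\<phi>. test_fun \<phi> \<longrightarrow>
        (\<integral>y. \<psi> y * deriv \<phi> y \<partial>lborel) = - (\<integral>y. g y * \<phi> y \<partial>lborel))"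

definition energy :: "(real \<Rightarrow> real) \<Rightarrow> (real \<Rightarrow> real) \<Rightarrow> ennreal" where
  "energy c \<psi> = (if \<exists>g. weak_deriv \<psi> g
     then (\<integral>\<^sup>+ y. ennreal (1/2 * (SOME g. weak_deriv \<psi> g) y ^ 2 + c \<bar>\<psi> y\<bar>) \<partial>lborel)
     else \<infinity>)"

definition admissible_cost :: "(real \<Rightarrow> real) \<Rightarrow> bool" where
  "admissible_cost \<tau> \<longleftrightarrow> (\<forall>w\<ge>0. \<tau> w \<ge> 0) \<and> mono_on {0..} \<tau> \<and> concave_on {0..} \<tau>
     \<and> continuous_on {0..} \<tau> \<and> \<tau> 0 = 0"

definition induced_cost :: "(real \<Rightarrow> real) \<Rightarrow> real \<Rightarrow> ennreal" where
  "induced_cost c w = (INF \<psi> \<in> {\<psi>. integrable lborel \<psi> \<and> (\<integral>y. \<psi> y \<partial>lborel) = w}. energy c \<psi>)"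

end

(*
  A finite value of tau at 1 provides psi with integral 1 and finite energy, hence with a
  locally integrable weak derivative g. Testing against smoothed indicators of [a, b] shows
  that psi b - psi a is the integral of g over [a, b] whenever a and b are Lebesgue points,
  so to the right of a point where |psi| = m > 0 the function psi has a continuous
  representative u. Since psi is integrable, u becomes arbitrarily small, so for every k it
  crosses the band between m/2^(k+1) and m/2^k on some interval, and these intervals are
  disjoint. On the k-th interval the integral of |g| is at least m/2^(k+1), while
  c(|u|) >= c(m/2^k)/2 because c(phi)/phi is nonincreasing; by Young's inequality
  sqrt(c(m/2^k)) |g| <= g^2/2 + c(|u|). Summing over k, the energy dominates
  sum_k m/2^(k+1) sqrt(c(m/2^k)). By the same monotonicity this dyadic sum controls the
  integral of sqrt c over [0, m], and its terms, which are the square roots of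
  c(phi) phi^2 / 4 at phi = m/2^k, tend to zero.
*)

theory Submission
  imports Defs "HOL-Computational_Algebra.Polynomial"
begin

lemma set_integrable_const_Icc: "set_integrable lborel {a..b::real} (\<lambda>y. c::real)"
  using borel_integrable_atLeastAtMost'[of a b "\<lambda>y. c"] by simp

lemma set_integrable_Icc_of_loc_integrable:
  "loc_integrable f \<Longrightarrow> set_integrable lborel {a..b} f"
  by (simp add: loc_integrable_def)

lemma borel_measurable_of_set_integrable_Icc:
  fixes g :: "real \<Rightarrow> real"
  assumes "\<And>a b. set_integrable lborel {a..b} g"
  shows "g \<in> borel_measurable lborel"
proof (rule borel_measurable_LIMSEQ_real)
  show "(\<lambda>n. indicator {- real n..real n} x *\<^sub>R g x) \<longlonglongrightarrow> g x" for x
  proof (rule tendsto_eventually)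
    obtain N :: nat where "\<bar>x\<bar> \<le> N" using real_arch_simple by blast
    then show "\<forall>\<^sub>F n in sequentially. indicator {- real n..real n} x *\<^sub>R g x = g x"
      unfolding eventually_sequentially by (intro exI[of _ N]) (auto simp: indicator_def)
  qed
  show "(\<lambda>x. indicator {- real n..real n} x *\<^sub>R g x) \<in> borel_measurable lborel" for n
    using assms unfolding set_integrable_def by (rule borel_measurable_integrable)
qed

lemma AE_not_in_negligible:
  assumes "negligible N"
  shows "AE x in lborel. x \<notin> N"
proof -
  have "AE x in lebesgue. x \<notin> N"
    using assms by (intro AE_not_in) (simp add: negligible_iff_null_sets)
  then show ?thesis by (simp add: AE_completion_iff)
qed

lemma integrable_small_values_beyond:
  fixes \<psi> :: "real \<Rightarrow> real"
  assumes \<psi>: "integrable lborel \<psi>" and N: "negligible N" and e: "0 < e"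
  shows "\<exists>y>p. y \<notin> N \<and> \<bar>\<psi> y\<bar> < e"
proof (rule ccontr)
  assume "\<not> ?thesis"
  then have far: "e \<le> \<bar>\<psi> y\<bar>" if "p < y" "y \<notin> N" for y
    using that by (meson not_less)
  have big: "AE y in lborel. p < y \<longrightarrow> e \<le> \<bar>\<psi> y\<bar>"
    using AE_not_in_negligible[OF N] by eventually_elim (use far in auto)
  define R where "R = ((\<integral>y. \<bar>\<psi> y\<bar> \<partial>lborel) + 1) / e"
  have "0 \<le> R" unfolding R_def using e by simp
  have "(\<integral>y. e * indicator {p<..p+R} y \<partial>lborel) \<le> (\<integral>y. \<bar>\<psi> y\<bar> \<partial>lborel)"
  proof (rule integral_mono_AE)
    show "integrable lborel (\<lambda>y. e * indicator {p<..p+R} y)"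
      using \<open>0 \<le> R\<close> by (auto intro!: integrable_real_indicator)
    show "AE y in lborel. e * indicator {p<..p+R} y \<le> \<bar>\<psi> y\<bar>"
      using big by eventually_elim (use e in \<open>auto simp: indicator_def\<close>)
  qed (use \<psi> in simp)
  with \<open>0 \<le> R\<close> have "e * R \<le> (\<integral>y. \<bar>\<psi> y\<bar> \<partial>lborel)" by simp
  then show False using e by (simp add: R_def)
qed

lemma abs_integral_le_nn_integral_abs:
  fixes g :: "real \<Rightarrow> real"
  assumes g: "set_integrable lborel {a..b} g" and "0 \<le> w"
  shows "ennreal (w * \<bar>integral {a..b} g\<bar>) \<le>
    (\<integral>\<^sup>+x. indicator {a<..<b} x * ennreal (w * \<bar>g x\<bar>) \<partial>lborel)"
proof -
  have wg: "set_integrable lborel {a..b} (\<lambda>x. w * \<bar>g x\<bar>)"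
    by (intro set_integrable_abs set_integrable_mult_right g)
  have "w * \<bar>integral {a..b} g\<bar> \<le> w * integral {a..b} (\<lambda>x. \<bar>g x\<bar>)"
    using integral_norm_bound_integral[of g "{a..b}" "\<lambda>x. \<bar>g x\<bar>"] \<open>0 \<le> w\<close>
      set_borel_integral_eq_integral(1)[OF g]
      set_borel_integral_eq_integral(1)[OF set_integrable_abs[OF g]]
    by (intro mult_left_mono) auto
  also have "\<dots> = w * (\<integral>x. indicator {a..b} x * \<bar>g x\<bar> \<partial>lborel)"
    using set_borel_integral_eq_integral(2)[OF set_integrable_abs[OF g]]
    by (simp add: set_lebesgue_integral_def)
  also have "\<dots> = (\<integral>x. indicator {a..b} x * (w * \<bar>g x\<bar>) \<partial>lborel)"
    by (simp add: ac_simps)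
  finally have "ennreal (w * \<bar>integral {a..b} g\<bar>) \<le>
      (\<integral>\<^sup>+x. ennreal (indicator {a..b} x * (w * \<bar>g x\<bar>)) \<partial>lborel)"
    using wg \<open>0 \<le> w\<close>
    by (subst nn_integral_eq_integral)
       (auto simp: set_integrable_def mult.commute intro: ennreal_leI)
  also have "\<dots> = (\<integral>\<^sup>+x. indicator {a<..<b} x * ennreal (w * \<bar>g x\<bar>) \<partial>lborel)"
    using AE_lborel_singleton[of a] AE_lborel_singleton[of b]
    by (intro nn_integral_cong_AE, eventually_elim) (auto simp: indicator_def)
  finally show ?thesis .
qed

lemma sum_indicator_disjoint_le:
  fixes e :: "nat \<Rightarrow> ennreal"
  assumes "\<And>k j. k \<noteq> j \<Longrightarrow> I k \<inter> I j = {}" and "\<And>k. x \<in> I k \<Longrightarrow> e k \<le> F"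
  shows "(\<Sum>k\<in>K. indicator (I k) x * e k) \<le> F"
proof (cases "finite K \<and> (\<exists>k\<in>K. x \<in> I k)")
  case True
  then obtain k where k: "finite K" "k \<in> K" "x \<in> I k" by blast
  have "(\<Sum>j\<in>K - {k}. indicator (I j) x * e j) = 0"
    using assms(1) k(3) by (intro sum.neutral) (auto simp: indicator_def)
  then have "(\<Sum>j\<in>K. indicator (I j) x * e j) = e k"
    using sum.remove[OF k(1,2), of "\<lambda>j. indicator (I j) x * e j"] k(3) by simp
  then show ?thesis using assms(2)[OF k(3)] by simp
next
  case False
  then have "(\<Sum>k\<in>K. indicator (I k) x * e k) = 0"
    by (cases "finite K") (auto intro!: sum.neutral)
  then show ?thesis by simp
qed

lemma sum_nn_integral_disjoint_le:
  fixes e :: "nat \<Rightarrow> real \<Rightarrow> ennreal" and f :: "real \<Rightarrow> ennreal"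
  assumes [measurable]: "\<And>k. e k \<in> borel_measurable lborel" "\<And>k. I k \<in> sets lborel"
    and disjoint: "\<And>k j. k \<noteq> j \<Longrightarrow> I k \<inter> I j = {}"
    and bound: "AE x in lborel. \<forall>k. x \<in> I k \<longrightarrow> e k x \<le> f x"
  shows "(\<Sum>k\<in>K. \<integral>\<^sup>+x. indicator (I k) x * e k x \<partial>lborel) \<le> (\<integral>\<^sup>+x. f x \<partial>lborel)"
proof -
  have "(\<Sum>k\<in>K. \<integral>\<^sup>+x. indicator (I k) x * e k x \<partial>lborel) =
      (\<integral>\<^sup>+x. (\<Sum>k\<in>K. indicator (I k) x * e k x) \<partial>lborel)"
    by (rule nn_integral_sum[symmetric]) measurable
  also have "\<dots> \<le> (\<integral>\<^sup>+x. f x \<partial>lborel)"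
    using bound
    by (intro nn_integral_mono_AE, eventually_elim) (intro sum_indicator_disjoint_le disjoint, auto)
  finally show ?thesis .
qed

lemma ennreal_le_suminf: "(f k :: ennreal) \<le> suminf f"
  using sum_le_suminf[of f "{k}"] summableI[of f] by simp

lemma Liminf_at_right_eq_0_of_sequence:
  fixes f :: "real \<Rightarrow> real"
  assumes nonneg: "\<forall>\<^sub>F x in at_right a. 0 \<le> f x"
    and s: "filterlim s (at_right a) sequentially" and lim: "(\<lambda>k. f (s k)) \<longlonglongrightarrow> 0"
  shows "Liminf (at_right a) (\<lambda>x. ereal (f x)) = 0"
proof (rule antisym)
  have "Liminf (at_right a) (\<lambda>x. ereal (f x)) \<le> Liminf (filtermap s sequentially) (\<lambda>x. ereal (f x))"
    using s unfolding Liminf_def filterlim_def by (intro SUP_subset_mono) (auto simp: le_filter_def)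
  also have "\<dots> \<le> Liminf sequentially (\<lambda>k. ereal (f (s k)))"
    by (rule Liminf_filtermap_le)
  also have "\<dots> = 0"
    using lim by (intro lim_imp_Liminf) (auto simp: zero_ereal_def intro: tendsto_ereal)
  finally show "Liminf (at_right a) (\<lambda>x. ereal (f x)) \<le> 0" .
  show "0 \<le> Liminf (at_right a) (\<lambda>x. ereal (f x))"
    using nonneg by (intro Liminf_bounded) simp
qed

section \<open>Smooth functions\<close>

definition smooth_fun :: "(real \<Rightarrow> real) \<Rightarrow> bool" where
  "smooth_fun f \<longleftrightarrow> (\<forall>n. (deriv ^^ n) f differentiable_on UNIV)"

lemma test_fun_iff: "test_fun \<phi> \<longleftrightarrow> smooth_fun \<phi> \<and> bounded {y. \<phi> y \<noteq> 0}"
  by (simp add: test_fun_def smooth_fun_def)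

lemma DERIV_deriv_of_differentiable_on_UNIV:
  fixes f :: "real \<Rightarrow> real"
  assumes "f differentiable_on UNIV"
  shows "(f has_real_derivative deriv f x) (at x)"
  using assms by (simp add: differentiable_on_def DERIV_deriv_iff_real_differentiable)

lemma smooth_fun_iff: "smooth_fun f \<longleftrightarrow> f differentiable_on UNIV \<and> smooth_fun (deriv f)"
proof
  assume "smooth_fun f"
  then show "f differentiable_on UNIV \<and> smooth_fun (deriv f)"
    unfolding smooth_fun_def by (metis funpow_0 funpow_Suc_right o_apply)
next
  assume "f differentiable_on UNIV \<and> smooth_fun (deriv f)"
  then show "smooth_fun f"
    unfolding smooth_fun_def
    by (intro allI, case_tac n) (auto simp: funpow_Suc_right simp del: funpow.simps)
qed

lemma smooth_fun_coinduct:
  assumes step: "\<And>f. P f \<Longrightarrow> \<exists>f'. P f' \<and> (\<forall>x. (f has_real_derivative f' x) (at x))"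
    and "P f"
  shows "smooth_fun f"
proof -
  have "\<forall>f. P f \<longrightarrow> (deriv ^^ n) f differentiable_on UNIV" for n
  proof (induction n)
    case 0
    show ?case
      by (metis step funpow_0 differentiable_at_imp_differentiable_on real_differentiable_def)
  next
    case (Suc n)
    have "P (deriv f)" if "P f" for f
      using step[OF that] DERIV_imp_deriv by (metis ext)
    with Suc show ?case by (simp add: funpow_Suc_right del: funpow.simps)
  qed
  then show ?thesis using assms(2) unfolding smooth_fun_def by blast
qed

lemma smooth_fun_DERIV:
  assumes "\<And>x. (f has_real_derivative f' x) (at x)" and "smooth_fun f'"
  shows "smooth_fun f"
proof -
  have "deriv f = f'" using assms(1) by (intro ext DERIV_imp_deriv)
  moreover have "f differentiable_on UNIV"
    using assms(1) by (meson differentiable_at_imp_differentiable_on real_differentiable_def)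
  ultimately show ?thesis using assms(2) unfolding smooth_fun_iff[of f] by simp
qed

lemma continuous_on_smooth_fun: "smooth_fun f \<Longrightarrow> continuous_on S f"
  unfolding smooth_fun_iff[of f]
  by (meson differentiable_imp_continuous_on differentiable_on_subset subset_UNIV)

lemma smooth_fun_const: "smooth_fun (\<lambda>x. c)"
proof (rule smooth_fun_coinduct[where P="\<lambda>f. \<exists>c. f = (\<lambda>x. c)"])
  fix f :: "real \<Rightarrow> real"
  assume "\<exists>c. f = (\<lambda>x. c)"
  then show "\<exists>f'. (\<exists>c. f' = (\<lambda>x. c)) \<and> (\<forall>x. (f has_real_derivative f' x) (at x))"
    by (auto intro!: exI[of _ "\<lambda>x. 0"])
qed blast

(* By the Leibniz rule this class is closed under differentiation, which gives smoothness of
   products by coinduction. *)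
inductive sum_of_products :: "(real \<Rightarrow> real) \<Rightarrow> bool" where
  product: "smooth_fun f \<Longrightarrow> smooth_fun g \<Longrightarrow> sum_of_products (\<lambda>x. f x * g x)"
| plus: "sum_of_products h \<Longrightarrow> sum_of_products k \<Longrightarrow> sum_of_products (\<lambda>x. h x + k x)"

lemma sum_of_products_DERIV:
  "sum_of_products h \<Longrightarrow> \<exists>h'. sum_of_products h' \<and> (\<forall>x. (h has_real_derivative h' x) (at x))"
proof (induction rule: sum_of_products.induct)
  case (product f g)
  have d: "f differentiable_on UNIV" "smooth_fun (deriv f)"
    "g differentiable_on UNIV" "smooth_fun (deriv g)"
    using product smooth_fun_iff by blast+
  have "sum_of_products (\<lambda>x. (\<lambda>x. deriv f x * g x) x + (\<lambda>x. f x * deriv g x) x)"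
    by (intro sum_of_products.intros d product)
  moreover have
    "((\<lambda>x. f x * g x) has_real_derivative deriv f x * g x + f x * deriv g x) (at x)" for x
    using DERIV_mult[OF DERIV_deriv_of_differentiable_on_UNIV[OF d(1)]
        DERIV_deriv_of_differentiable_on_UNIV[OF d(3)], of x]
    by (simp add: algebra_simps)
  ultimately show ?case by auto
next
  case (plus h k)
  then obtain h' k' where "sum_of_products h'" "sum_of_products k'"
    "\<forall>x. (h has_real_derivative h' x) (at x)" "\<forall>x. (k has_real_derivative k' x) (at x)"
    by blast
  then show ?case
    by (intro exI[of _ "\<lambda>x. h' x + k' x"]) (auto intro!: sum_of_products.intros derivative_intros)
qed

lemma smooth_fun_sum_of_products: "sum_of_products h \<Longrightarrow> smooth_fun h"
  by (rule smooth_fun_coinduct[where P=sum_of_products]) (use sum_of_products_DERIV in blast)+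

lemma smooth_fun_mult: "smooth_fun f \<Longrightarrow> smooth_fun g \<Longrightarrow> smooth_fun (\<lambda>x. f x * g x)"
  by (rule smooth_fun_sum_of_products, rule sum_of_products.product)

lemma smooth_fun_cmult: "smooth_fun f \<Longrightarrow> smooth_fun (\<lambda>x. c * f x)"
  using smooth_fun_mult[OF smooth_fun_const] .

lemma smooth_fun_add:
  assumes "smooth_fun f" "smooth_fun g"
  shows "smooth_fun (\<lambda>x. f x + g x)"
proof -
  have "sum_of_products (\<lambda>x. (\<lambda>x. f x * 1) x + (\<lambda>x. g x * 1) x)"
    by (intro sum_of_products.plus sum_of_products.product[of _ "\<lambda>x. 1"] assms smooth_fun_const)
  then show ?thesis using smooth_fun_sum_of_products by simp
qed

lemma smooth_fun_diff: "smooth_fun f \<Longrightarrow> smooth_fun g \<Longrightarrow> smooth_fun (\<lambda>x. f x - g x)"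
  using smooth_fun_add[OF _ smooth_fun_cmult, of f g "-1"] by simp

lemma smooth_fun_affine:
  assumes "smooth_fun f"
  shows "smooth_fun (\<lambda>x. f (a * x + b))"
proof (rule smooth_fun_coinduct[where P="\<lambda>h. \<exists>f c. smooth_fun f \<and> h = (\<lambda>x. c * f (a * x + b))"])
  fix h assume "\<exists>f c. smooth_fun f \<and> h = (\<lambda>x. c * f (a * x + b))"
  then obtain f c where f: "smooth_fun f" and h: "h = (\<lambda>x. c * f (a * x + b))" by blast
  have "f differentiable_on UNIV" "smooth_fun (deriv f)"
    using f smooth_fun_iff by blast+
  have "(h has_real_derivative (c * a) * deriv f (a * x + b)) (at x)" for x
  proof -
    have "((\<lambda>x. a * x + b) has_real_derivative a) (at x)"
      by (auto intro!: derivative_eq_intros)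
    from DERIV_chain2[OF DERIV_deriv_of_differentiable_on_UNIV[OF \<open>f differentiable_on UNIV\<close>] this]
    have "((\<lambda>x. f (a * x + b)) has_real_derivative deriv f (a * x + b) * a) (at x)" .
    from DERIV_cmult[OF this, of c] show ?thesis unfolding h by (simp add: algebra_simps)
  qed
  with \<open>smooth_fun (deriv f)\<close> show "\<exists>h'. (\<exists>f c. smooth_fun f \<and> h' = (\<lambda>x. c * f (a * x + b))) \<and>
      (\<forall>x. (h has_real_derivative h' x) (at x))"
    by blast
next
  show "\<exists>g c. smooth_fun g \<and> (\<lambda>x. f (a * x + b)) = (\<lambda>x. c * g (a * x + b))"
    using assms by (intro exI[of _ f] exI[of _ 1]) simp
qed

section \<open>A smooth bump on the unit interval\<close>

lemma poly_div_exp_tendsto_0: "((\<lambda>s. poly q s / exp s) \<longlongrightarrow> (0::real)) at_top"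
proof -
  have "((\<lambda>s. (\<Sum>i\<le>degree q. coeff q i * (s ^ i / exp s))) \<longlongrightarrow> (\<Sum>i\<le>degree q. coeff q i * 0)) at_top"
    by (intro tendsto_sum tendsto_mult tendsto_const tendsto_power_div_exp_0)
  then show ?thesis by (simp add: poly_altdef sum_divide_distrib)
qed

definition flat_exp :: "real poly \<Rightarrow> real \<Rightarrow> real" where
  "flat_exp p x = (if 0 < x then poly p (1/x) * exp (-1/x) else 0)"

lemma flat_exp_DERIV:
  "(flat_exp p has_real_derivative flat_exp ([:0, 0, 1:] * (p - pderiv p)) x) (at x)"
proof (cases "0 < x")
  case True
  have "((\<lambda>x. poly p (1/x) * exp (-1/x)) has_real_derivative
      poly (pderiv p) (1/x) * (- 1 / x^2) * exp (-1/x) + poly p (1/x) * (exp (-1/x) * (1/x^2)))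
      (at x)"
    using True
    by (auto intro!: derivative_eq_intros DERIV_chain2[OF poly_DERIV]
        simp: power2_eq_square field_simps)
  then have "((\<lambda>x. poly p (1/x) * exp (-1/x)) has_real_derivative
      flat_exp ([:0, 0, 1:] * (p - pderiv p)) x) (at x)"
    using True by (simp add: flat_exp_def power2_eq_square field_simps)
  then show ?thesis
    by (rule has_field_derivative_transform_within_open[where S="{0<..}"])
       (use True in \<open>auto simp: flat_exp_def\<close>)
next
  case False
  show ?thesis
  proof (cases "x < 0")
    case True
    have "((\<lambda>x. 0) has_real_derivative flat_exp ([:0, 0, 1:] * (p - pderiv p)) x) (at x)"
      using True by (simp add: flat_exp_def)
    then show ?thesis
      by (rule has_field_derivative_transform_within_open[where S="{..<0}"])
         (use True in \<open>auto simp: flat_exp_def\<close>)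
  next
    case False
    with \<open>\<not> 0 < x\<close> have x0: "x = 0" by simp
    have left: "((\<lambda>y. (flat_exp p y - flat_exp p 0) / (y - 0)) \<longlongrightarrow> 0) (at_left 0)"
    proof (rule Lim_transform_eventually[OF tendsto_const])
      have "\<forall>\<^sub>F y in at_left (0::real). y \<in> {-1<..<0}" by (rule eventually_at_left_real) simp
      then show "\<forall>\<^sub>F y in at_left 0. 0 = (flat_exp p y - flat_exp p 0) / (y - 0)"
        by eventually_elim (auto simp: flat_exp_def)
    qed
    have right: "((\<lambda>y. (flat_exp p y - flat_exp p 0) / (y - 0)) \<longlongrightarrow> 0) (at_right 0)"
      unfolding filterlim_at_right_to_top
    proof (rule Lim_transform_eventually[OF poly_div_exp_tendsto_0[of "pCons 0 p"]])
      show "\<forall>\<^sub>F s in at_top. poly (pCons 0 p) s / exp s =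
          (flat_exp p (inverse s) - flat_exp p 0) / (inverse s - 0)"
        by (auto simp: eventually_at_top_dense flat_exp_def exp_minus field_simps
            intro!: exI[of _ 0])
    qed
    have "(flat_exp p has_real_derivative 0) (at 0)"
      unfolding has_field_derivative_iff using filterlim_at_split left right by blast
    then show ?thesis using x0 by (simp add: flat_exp_def)
  qed
qed

lemma smooth_fun_flat_exp: "smooth_fun (flat_exp p)"
  by (rule smooth_fun_coinduct[where P="\<lambda>h. \<exists>p. h = flat_exp p"]) (use flat_exp_DERIV in blast)+

definition raw_bump :: "real \<Rightarrow> real" where
  "raw_bump x = flat_exp 1 x * flat_exp 1 (1 - x)"

lemma smooth_fun_raw_bump: "smooth_fun raw_bump"
proof -
  have "smooth_fun (\<lambda>x. flat_exp 1 ((-1) * x + 1))"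
    by (rule smooth_fun_affine[OF smooth_fun_flat_exp])
  then show ?thesis
    unfolding raw_bump_def using smooth_fun_mult[OF smooth_fun_flat_exp] by simp
qed

lemma raw_bump_nonneg: "raw_bump x \<ge> 0"
  by (simp add: raw_bump_def flat_exp_def)

lemma raw_bump_eq_0: "x \<le> 0 \<or> 1 \<le> x \<Longrightarrow> raw_bump x = 0"
  by (auto simp: raw_bump_def flat_exp_def)

lemma integral_raw_bump_pos: "integral {0..1} raw_bump > 0"
proof -
  have "exp (-8) \<le> raw_bump x" if "1/4 \<le> x" "x \<le> 3/4" for x
  proof -
    have "exp (-4) * exp (-4) \<le> exp (-1/x) * exp (-1/(1-x))"
      using that by (intro mult_mono) (auto simp: field_simps)
    then show ?thesis using that by (simp add: raw_bump_def flat_exp_def mult_exp_exp)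
  qed
  have int: "raw_bump integrable_on {a..b}" for a b
    by (intro integrable_continuous_interval continuous_on_smooth_fun smooth_fun_raw_bump)
  have "integral {1/4..3/4::real} (\<lambda>x. exp (-8::real)) \<le> integral {1/4..3/4} raw_bump"
    by (intro integral_le int integrable_const_ivl \<open>\<And>x. _ \<Longrightarrow> _ \<Longrightarrow> exp (-8) \<le> raw_bump x\<close>) auto
  also have "\<dots> \<le> integral {0..1} raw_bump"
    by (rule integral_subset_le) (auto simp: int raw_bump_nonneg)
  finally have "exp (-8) \<le> integral {0..1} raw_bump * 2" by simp
  with exp_gt_zero[of "-8"] show ?thesis by linarith
qed

definition bump :: "real \<Rightarrow> real" where
  "bump x = raw_bump x / integral {0..1} raw_bump"

lemma smooth_fun_bump: "smooth_fun bump"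
  unfolding bump_def divide_inverse mult.commute[of "raw_bump _"]
  by (rule smooth_fun_cmult[OF smooth_fun_raw_bump])

lemma continuous_on_bump: "continuous_on S bump"
  by (rule continuous_on_smooth_fun[OF smooth_fun_bump])

lemma bump_integrable_on: "bump integrable_on {a..b}"
  by (rule integrable_continuous_interval[OF continuous_on_bump])

lemma borel_measurable_bump[measurable]: "bump \<in> borel_measurable borel"
  by (rule borel_measurable_continuous_onI[OF continuous_on_bump])

lemma bump_nonneg: "bump x \<ge> 0"
  using raw_bump_nonneg integral_raw_bump_pos by (simp add: bump_def)

lemma bump_eq_0: "x \<le> 0 \<or> 1 \<le> x \<Longrightarrow> bump x = 0"
  by (simp add: bump_def raw_bump_eq_0)

lemma integral_bump: "integral {0..1} bump = 1"
  unfolding bump_def using integral_raw_bump_pos by simp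

lemma bump_bounded: "\<exists>B. \<forall>x. \<bar>bump x\<bar> \<le> B"
proof -
  have "compact (bump ` {0..1})" by (intro compact_continuous_image continuous_on_bump compact_Icc)
  then obtain B where B: "\<forall>y\<in>bump ` {0..1}. norm y \<le> B"
    using compact_imp_bounded bounded_iff by metis
  have "\<bar>bump x\<bar> \<le> B" for x
    using B bump_eq_0[of x] by (cases "0 \<le> x \<and> x \<le> 1") force+
  then show ?thesis by blast
qed

lemma bump_lborel: "integrable lborel bump" "(\<integral>x. bump x \<partial>lborel) = 1"
proof -
  have si: "set_integrable lborel {0..1} bump"
    by (rule borel_integrable_atLeastAtMost'[OF continuous_on_bump])
  have eq: "(\<lambda>x. indicator {0..1} x *\<^sub>R bump x) = bump"
  proof
    fix x show "indicator {0..1} x *\<^sub>R bump x = bump x"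
      by (cases "0 \<le> x \<and> x \<le> 1") (auto simp: bump_eq_0)
  qed
  from si show "integrable lborel bump" unfolding set_integrable_def eq .
  have "(LINT x:{0..1}|lborel. bump x) = integral {0..1} bump"
    by (rule set_borel_integral_eq_integral(2)[OF si])
  then show "(\<integral>x. bump x \<partial>lborel) = 1" unfolding set_lebesgue_integral_def eq integral_bump .
qed

section \<open>Smooth plateaus and kernel averages\<close>

(* Any lower limit below 0 would do, since the bump vanishes on (-\<infinity>, 0]. *)
definition smooth_step :: "real \<Rightarrow> real" where
  "smooth_step x = integral {-1..x} bump"

lemma smooth_step_eq_0: "x \<le> 0 \<Longrightarrow> smooth_step x = 0"
proof -
  assume "x \<le> 0"
  then have "integral {-1..x} bump = integral {-1..x} (\<lambda>x. 0)"
    by (intro Henstock_Kurzweil_Integration.integral_cong) (auto simp: bump_eq_0)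
  then show ?thesis by (simp add: smooth_step_def)
qed

lemma smooth_step_eq_integral: "0 \<le> x \<Longrightarrow> smooth_step x = integral {0..x} bump"
proof -
  assume "0 \<le> x"
  then have "integral {-1..0} bump + integral {0..x} bump = integral {-1..x} bump"
    by (intro Henstock_Kurzweil_Integration.integral_combine bump_integrable_on) auto
  with smooth_step_eq_0[of 0] show ?thesis by (simp add: smooth_step_def)
qed

lemma smooth_step_eq_1: "1 \<le> x \<Longrightarrow> smooth_step x = 1"
proof -
  assume x: "1 \<le> x"
  then have "integral {0..1} bump + integral {1..x} bump = integral {0..x} bump"
    by (intro Henstock_Kurzweil_Integration.integral_combine bump_integrable_on) auto
  moreover have "integral {1..x} bump = integral {1..x} (\<lambda>x. 0)"
    by (intro Henstock_Kurzweil_Integration.integral_cong) (auto simp: bump_eq_0)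
  ultimately show ?thesis using smooth_step_eq_integral[of x] x integral_bump by simp
qed

lemma smooth_step_bounds: "0 \<le> smooth_step x \<and> smooth_step x \<le> 1"
proof (cases "0 < x \<and> x < 1")
  case True
  have "integral {0..x} bump \<le> integral {0..1} bump"
    by (rule integral_subset_le) (use True bump_integrable_on bump_nonneg in auto)
  moreover have "0 \<le> integral {0..x} bump"
    by (intro Henstock_Kurzweil_Integration.integral_nonneg bump_integrable_on bump_nonneg)
  ultimately show ?thesis using smooth_step_eq_integral[of x] True integral_bump by simp
qed (auto simp: smooth_step_eq_0 smooth_step_eq_1)

lemma smooth_step_DERIV: "(smooth_step has_real_derivative bump x) (at x)"
proof (cases "x > -1")
  case True
  have "((\<lambda>x. integral {-1..x} bump) has_real_derivative bump x) (at x within {-1..x+1})"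
    by (rule integral_has_real_derivative[OF continuous_on_bump]) (use True in auto)
  moreover have "at x within {-1..x+1} = at x"
    by (rule at_within_interior) (use True in auto)
  ultimately show ?thesis unfolding smooth_step_def by simp
next
  case False
  have "((\<lambda>x. 0) has_real_derivative bump x) (at x)" using False by (simp add: bump_eq_0)
  then show ?thesis
    by (rule has_field_derivative_transform_within_open[where S="{..<0}"])
       (use False in \<open>auto simp: smooth_step_eq_0\<close>)
qed

lemma smooth_fun_smooth_step: "smooth_fun smooth_step"
  using smooth_fun_DERIV[OF smooth_step_DERIV smooth_fun_bump] .

lemma borel_measurable_smooth_step[measurable]: "smooth_step \<in> borel_measurable borel"
  by (intro borel_measurable_continuous_onI continuous_on_smooth_fun smooth_fun_smooth_step)

definition bump_kernel :: "real \<Rightarrow> real \<Rightarrow> real \<Rightarrow> real" where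
  "bump_kernel x h y = bump ((y - x) / h) / h"

definition smooth_plateau :: "real \<Rightarrow> real \<Rightarrow> real \<Rightarrow> real \<Rightarrow> real" where
  "smooth_plateau a b h y = smooth_step ((y - a) / h) - smooth_step ((y - b) / h)"

lemma smooth_plateau_DERIV:
  assumes "0 < h"
  shows "(smooth_plateau a b h has_real_derivative bump_kernel a h y - bump_kernel b h y) (at y)"
proof -
  have "(smooth_plateau a b h has_real_derivative
      bump ((y - a) / h) * (1 / h) - bump ((y - b) / h) * (1 / h)) (at y)"
    unfolding smooth_plateau_def
    by (intro DERIV_diff DERIV_chain2[OF smooth_step_DERIV])
       (use assms in \<open>auto intro!: derivative_eq_intros\<close>)
  then show ?thesis by (simp add: bump_kernel_def)
qed

lemma smooth_plateau_eq_0: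
  assumes "0 < h" "a \<le> b" "y \<notin> {a..b+h}"
  shows "smooth_plateau a b h y = 0"
proof -
  from assms(3) consider "y < a" | "b + h < y" by fastforce
  then show ?thesis
  proof cases
    case 1
    then have "(y - a)/h \<le> 0" "(y - b)/h \<le> 0" using assms by (auto simp: divide_le_0_iff)
    then show ?thesis by (simp add: smooth_plateau_def smooth_step_eq_0)
  next
    case 2
    then have "1 \<le> (y - a)/h" "1 \<le> (y - b)/h" using assms by (auto simp: field_simps)
    then show ?thesis by (simp add: smooth_plateau_def smooth_step_eq_1)
  qed
qed

lemma test_fun_smooth_plateau:
  assumes "0 < h" "a \<le> b"
  shows "test_fun (smooth_plateau a b h)"
  unfolding test_fun_iff
proof
  have "smooth_fun (\<lambda>y. smooth_step ((1/h) * y + (-a/h)) - smooth_step ((1/h) * y + (-b/h)))"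
    by (intro smooth_fun_diff smooth_fun_affine smooth_fun_smooth_step)
  moreover have "(\<lambda>y. smooth_step ((1/h) * y + (-a/h)) - smooth_step ((1/h) * y + (-b/h))) =
      smooth_plateau a b h"
    unfolding smooth_plateau_def using assms by (intro ext) (simp add: field_simps)
  ultimately show "smooth_fun (smooth_plateau a b h)" by simp
  have "{y. smooth_plateau a b h y \<noteq> 0} \<subseteq> {a..b+h}"
    using smooth_plateau_eq_0[OF assms] by blast
  then show "bounded {y. smooth_plateau a b h y \<noteq> 0}"
    by (rule bounded_subset[OF bounded_closed_interval])
qed

lemma smooth_plateau_bound: "\<bar>smooth_plateau a b h y\<bar> \<le> 1"
  using smooth_step_bounds[of "(y - a) / h"] smooth_step_bounds[of "(y - b) / h"]
  by (simp add: smooth_plateau_def abs_le_iff)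

lemma borel_measurable_smooth_plateau[measurable]: "smooth_plateau a b h \<in> borel_measurable borel"
  unfolding smooth_plateau_def by measurable

lemma smooth_plateau_tendsto_indicator:
  assumes "a < b"
  shows "(\<lambda>n. smooth_plateau a b (1 / Suc n) y) \<longlonglongrightarrow> indicator {a<..b} y"
proof -
  have large: "\<forall>\<^sub>F n in sequentially. 1 \<le> t * Suc n" if t: "0 < t" for t :: real
  proof -
    obtain N :: nat where N: "1 / t < N" using reals_Archimedean2 by blast
    have "1 \<le> t * Suc n" if "N \<le> n" for n
    proof -
      have "1 < t * N" using N t by (simp add: field_simps)
      also have "\<dots> \<le> t * Suc n" using that t by (intro mult_left_mono) auto
      finally show ?thesis by simp
    qed
    then show ?thesis by (auto simp: eventually_sequentially)
  qed
  consider "y \<le> a" | "a < y" "y \<le> b" | "b < y" by fastforce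
  then have "\<forall>\<^sub>F n in sequentially. smooth_plateau a b (1 / Suc n) y = indicator {a<..b} y"
  proof cases
    case 1
    then have "smooth_plateau a b (1 / Suc n) y = 0" for n
      using assms by (simp add: smooth_plateau_def smooth_step_eq_0 mult_nonpos_nonneg)
    with 1 show ?thesis by simp
  next
    case 2
    from large[of "y - a"] 2 have "\<forall>\<^sub>F n in sequentially. 1 \<le> (y - a) * Suc n" by simp
    then show ?thesis
      by eventually_elim
         (use 2 in \<open>simp add: smooth_plateau_def smooth_step_eq_0 smooth_step_eq_1
            mult_nonpos_nonneg\<close>)
  next
    case 3
    from large[of "y - a"] large[of "y - b"] 3 assms
    have "\<forall>\<^sub>F n in sequentially. 1 \<le> (y - a) * Suc n \<and> 1 \<le> (y - b) * Suc n"
      by (simp add: eventually_conj)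
    then show ?thesis
      by eventually_elim (use 3 assms in \<open>simp add: smooth_plateau_def smooth_step_eq_1\<close>)
  qed
  then show ?thesis by (rule tendsto_eventually)
qed

lemma bump_kernel_eq_0: "0 < h \<Longrightarrow> y \<notin> {x..x+h} \<Longrightarrow> bump_kernel x h y = 0"
  by (auto simp: bump_kernel_def bump_eq_0 field_simps divide_le_0_iff)

lemma bump_kernel_bound: "(\<And>t. \<bar>bump t\<bar> \<le> B) \<Longrightarrow> 0 < h \<Longrightarrow> \<bar>bump_kernel x h y\<bar> \<le> B / h"
  by (simp add: bump_kernel_def divide_right_mono)

lemma borel_measurable_bump_kernel[measurable]: "bump_kernel x h \<in> borel_measurable borel"
  unfolding bump_kernel_def by measurable

lemma bump_kernel_lborel:
  assumes "0 < h"
  shows "integrable lborel (bump_kernel x h)" "(\<integral>y. bump_kernel x h y \<partial>lborel) = 1"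
proof -
  have rescaled: "(\<lambda>t. bump_kernel x h (x + h * t)) = (\<lambda>t. bump t / h)"
    using assms by (intro ext) (simp add: bump_kernel_def)
  then show "integrable lborel (bump_kernel x h)"
    using lborel_integrable_real_affine_iff[of h "bump_kernel x h" x] assms bump_lborel(1) by simp
  have "(\<integral>y. bump_kernel x h y \<partial>lborel) = \<bar>h\<bar> *\<^sub>R (\<integral>t. bump_kernel x h (x + h * t) \<partial>lborel)"
    by (rule lborel_integral_real_affine) (use assms in simp)
  also have "\<dots> = 1" unfolding rescaled using assms bump_lborel(2) by simp
  finally show "(\<integral>y. bump_kernel x h y \<partial>lborel) = 1" .
qed

definition kernel_average :: "(real \<Rightarrow> real) \<Rightarrow> real \<Rightarrow> real \<Rightarrow> real" where
  "kernel_average f x h = (\<integral>y. f y * bump_kernel x h y \<partial>lborel)"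

lemma integrable_mult_bump_kernel:
  assumes f: "set_integrable lborel {x..x+h} f" and h: "0 < h"
  shows "integrable lborel (\<lambda>y. f y * bump_kernel x h y)"
proof -
  obtain B where B: "\<And>t. \<bar>bump t\<bar> \<le> B" using bump_bounded by blast
  define F where "F y = indicator {x..x+h} y *\<^sub>R f y" for y
  have F: "integrable lborel F" using f unfolding set_integrable_def F_def .
  have "(\<lambda>y. f y * bump_kernel x h y) = (\<lambda>y. F y * bump_kernel x h y)"
  proof
    fix y show "f y * bump_kernel x h y = F y * bump_kernel x h y"
      by (cases "y \<in> {x..x+h}") (simp_all add: F_def bump_kernel_eq_0[OF h])
  qed
  moreover have "integrable lborel (\<lambda>y. F y * bump_kernel x h y)"
  proof (rule Bochner_Integration.integrable_bound)
    show "integrable lborel (\<lambda>y. B / h * \<bar>F y\<bar>)" using F by simp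
    show "(\<lambda>y. F y * bump_kernel x h y) \<in> borel_measurable lborel"
      using borel_measurable_integrable[OF F] by measurable
    have "0 \<le> B" using B[of 0] by simp
    have "\<bar>F y\<bar> * \<bar>bump_kernel x h y\<bar> \<le> \<bar>F y\<bar> * (B / h)" for y
      by (intro mult_left_mono bump_kernel_bound[OF B h]) auto
    then show "AE y in lborel. norm (F y * bump_kernel x h y) \<le> norm (B / h * \<bar>F y\<bar>)"
      using \<open>0 \<le> B\<close> h by (intro AE_I2) (simp add: abs_mult mult.commute)
  qed
  ultimately show ?thesis by simp
qed

lemma kernel_average_error:
  assumes f: "set_integrable lborel {x..x+h} f" and h: "0 < h" and B: "\<And>t. \<bar>bump t\<bar> \<le> B"
  shows "\<bar>kernel_average f x h - f x\<bar> \<le> B / h * integral {x..x+h} (\<lambda>y. \<bar>f y - f x\<bar>)"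
proof -
  have fi: "integrable lborel (\<lambda>y. f y * bump_kernel x h y)"
    by (rule integrable_mult_bump_kernel[OF f h])
  have ci: "integrable lborel (\<lambda>y. f x * bump_kernel x h y)"
    using bump_kernel_lborel[OF h] by simp
  have diff: "kernel_average f x h - f x =
      (\<integral>y. f y * bump_kernel x h y - f x * bump_kernel x h y \<partial>lborel)"
    using bump_kernel_lborel[OF h] Bochner_Integration.integral_diff[OF fi ci]
    by (simp add: kernel_average_def)
  have si: "set_integrable lborel {x..x+h} (\<lambda>y. \<bar>f y - f x\<bar>)"
    by (intro set_integrable_abs set_integral_diff(1) f set_integrable_const_Icc)
  have pointwise: "\<bar>f y * bump_kernel x h y - f x * bump_kernel x h y\<bar> \<le>
      B / h * (indicator {x..x+h} y *\<^sub>R \<bar>f y - f x\<bar>)" for y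
  proof (cases "y \<in> {x..x+h}")
    case True
    have "\<bar>f y * bump_kernel x h y - f x * bump_kernel x h y\<bar> = \<bar>f y - f x\<bar> * \<bar>bump_kernel x h y\<bar>"
      by (simp add: abs_mult[symmetric] left_diff_distrib)
    also have "\<dots> \<le> \<bar>f y - f x\<bar> * (B / h)"
      by (intro mult_left_mono bump_kernel_bound B h) auto
    finally show ?thesis using True by (simp add: mult.commute)
  qed (simp add: bump_kernel_eq_0[OF h])
  have "\<bar>kernel_average f x h - f x\<bar> \<le>
      (\<integral>y. \<bar>f y * bump_kernel x h y - f x * bump_kernel x h y\<bar> \<partial>lborel)"
    unfolding diff
    using integral_norm_bound[of lborel "\<lambda>y. f y * bump_kernel x h y - f x * bump_kernel x h y"]
    by simp
  also have "\<dots> \<le> (\<integral>y. B / h * (indicator {x..x+h} y *\<^sub>R \<bar>f y - f x\<bar>) \<partial>lborel)"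
    using fi ci si pointwise by (intro integral_mono) (auto simp: set_integrable_def)
  also have "\<dots> = B / h * integral {x..x+h} (\<lambda>y. \<bar>f y - f x\<bar>)"
    using set_borel_integral_eq_integral(2)[OF si] by (simp add: set_lebesgue_integral_def)
  finally show ?thesis .
qed

section \<open>Lebesgue points and weak derivatives\<close>

(* One-sided, because the kernels bump_kernel x h are supported in [x, x + h]. *)
definition right_lebesgue_point :: "(real \<Rightarrow> real) \<Rightarrow> real \<Rightarrow> bool" where
  "right_lebesgue_point f x \<longleftrightarrow>
     ((\<lambda>h. integral {x..x+h} (\<lambda>y. \<bar>f y - f x\<bar>) / h) \<longlongrightarrow> 0) (at_right 0)"

lemma kernel_average_tendsto:
  assumes f: "\<And>a b. set_integrable lborel {a..b} f" and x: "right_lebesgue_point f x"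
  shows "(kernel_average f x \<longlongrightarrow> f x) (at_right 0)"
proof -
  obtain B where B: "\<And>t. \<bar>bump t\<bar> \<le> B" using bump_bounded by blast
  have "((\<lambda>h. kernel_average f x h - f x) \<longlongrightarrow> 0) (at_right 0)"
  proof (rule Lim_null_comparison)
    show "\<forall>\<^sub>F h in at_right 0. norm (kernel_average f x h - f x) \<le>
        B * (integral {x..x+h} (\<lambda>y. \<bar>f y - f x\<bar>) / h)"
      using kernel_average_error[OF f _ B]
      by (auto simp: eventually_at_right_field intro!: exI[of _ 1])
    show "((\<lambda>h. B * (integral {x..x+h} (\<lambda>y. \<bar>f y - f x\<bar>) / h)) \<longlongrightarrow> 0) (at_right 0)"
      using tendsto_mult_right_zero[OF x[unfolded right_lebesgue_point_def]] .
  qed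
  then show ?thesis by (rule LIM_zero_cancel)
qed

lemma right_lebesgue_point_of_rational_averages:
  fixes f :: "real \<Rightarrow> real"
  assumes int: "\<And>q a b. (\<lambda>y. \<bar>f y - q\<bar>) integrable_on {a..b}"
    and avg: "\<And>q. q \<in> \<rat> \<Longrightarrow>
      ((\<lambda>h. integral {x..x+h} (\<lambda>y. \<bar>f y - q\<bar>) / h) \<longlongrightarrow> \<bar>f x - q\<bar>) (at_right 0)"
  shows "right_lebesgue_point f x"
  unfolding right_lebesgue_point_def tendsto_iff
proof (intro allI impI)
  fix e :: real assume e: "0 < e"
  obtain q where q: "q \<in> \<rat>" "f x < q" "q < f x + e/3"
    using Rats_dense_in_real[of "f x" "f x + e/3"] e by auto
  have "\<forall>\<^sub>F h in at_right 0. integral {x..x+h} (\<lambda>y. \<bar>f y - q\<bar>) / h < \<bar>f x - q\<bar> + e/3"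
    using avg[OF q(1)] e by (intro order_tendstoD(2)) auto
  with eventually_at_right_less[of "0::real"]
  show "\<forall>\<^sub>F h in at_right 0. dist (integral {x..x+h} (\<lambda>y. \<bar>f y - f x\<bar>) / h) 0 < e"
  proof eventually_elim
    case (elim h)
    let ?I = "integral {x..x+h} (\<lambda>y. \<bar>f y - f x\<bar>)"
    let ?Iq = "integral {x..x+h} (\<lambda>y. \<bar>f y - q\<bar>)"
    have "0 \<le> ?I"
      using int by (intro Henstock_Kurzweil_Integration.integral_nonneg) auto
    have "?I \<le> integral {x..x+h} (\<lambda>y. \<bar>f y - q\<bar> + \<bar>q - f x\<bar>)"
      by (rule integral_le) (auto intro!: int integrable_add integrable_const_ivl)
    also have "\<dots> = ?Iq + h * \<bar>q - f x\<bar>"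
      using elim by (subst integral_add) (auto intro!: int integrable_const_ivl)
    finally have "?I / h \<le> (?Iq + h * \<bar>q - f x\<bar>) / h"
      using elim by (intro divide_right_mono) auto
    also have "\<dots> = ?Iq / h + \<bar>q - f x\<bar>"
      using elim by (simp add: add_divide_distrib)
    finally show ?case
      using elim q \<open>0 \<le> ?I\<close> by (simp add: dist_real_def)
  qed
qed

lemma ae_right_lebesgue_point:
  fixes f :: "real \<Rightarrow> real"
  assumes f: "\<And>a b. set_integrable lborel {a..b} f"
  obtains N where "negligible N" "\<And>x. x \<notin> N \<Longrightarrow> right_lebesgue_point f x"
proof -
  have int: "(\<lambda>y. \<bar>f y - q\<bar>) integrable_on {a..b}" for a b q
    by (intro set_borel_integral_eq_integral(1) set_integrable_abs set_integral_diff(1) f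
        set_integrable_const_Icc)
  \<comment> \<open>The library differentiates the integral of one function at a time; rational q suffice.\<close>
  have "\<exists>N. negligible N \<and> (\<forall>x. x \<notin> N \<longrightarrow>
      ((\<lambda>h. integral {x..x+h} (\<lambda>y. \<bar>f y - q\<bar>) / h) \<longlongrightarrow> \<bar>f x - q\<bar>) (at_right 0))" for q
  proof -
    obtain N where N: "negligible N"
      "\<And>x e. \<lbrakk>x \<notin> N; 0 < e\<rbrakk> \<Longrightarrow> \<exists>d>0. \<forall>h. 0 < h \<and> h < d \<longrightarrow>
        norm (integral (cbox x (x + h *\<^sub>R One)) (\<lambda>y. \<bar>f y - q\<bar>) /\<^sub>R h ^ DIM(real) - \<bar>f x - q\<bar>) < e"
      using integrable_ccontinuous_explicit[of "\<lambda>y. \<bar>f y - q\<bar>"] int by (metis cbox_interval)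
    have "((\<lambda>h. integral {x..x+h} (\<lambda>y. \<bar>f y - q\<bar>) / h) \<longlongrightarrow> \<bar>f x - q\<bar>) (at_right 0)"
      if x: "x \<notin> N" for x
      unfolding tendsto_iff eventually_at_right_field
    proof (intro allI impI)
      fix e :: real assume "0 < e"
      with N(2)[OF x] obtain d where "0 < d" and d: "\<forall>h. 0 < h \<and> h < d \<longrightarrow>
          norm (integral (cbox x (x + h *\<^sub>R One)) (\<lambda>y. \<bar>f y - q\<bar>) /\<^sub>R h ^ DIM(real)
            - \<bar>f x - q\<bar>) < e"
        by blast
      show "\<exists>b>0. \<forall>h>0. h < b \<longrightarrow>
          dist (integral {x..x+h} (\<lambda>y. \<bar>f y - q\<bar>) / h) \<bar>f x - q\<bar> < e"
        using \<open>0 < d\<close> d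
        by (intro exI[of _ d]) (auto simp: cbox_interval divide_inverse mult.commute dist_real_def)
    qed
    with N(1) show ?thesis by blast
  qed
  then obtain NQ where NQ: "\<forall>q. negligible (NQ q) \<and> (\<forall>x. x \<notin> NQ q \<longrightarrow>
      ((\<lambda>h. integral {x..x+h} (\<lambda>y. \<bar>f y - q\<bar>) / h) \<longlongrightarrow> \<bar>f x - q\<bar>) (at_right 0))"
    using choice[where Q="\<lambda>q N. negligible N \<and> (\<forall>x. x \<notin> N \<longrightarrow>
      ((\<lambda>h. integral {x..x+h} (\<lambda>y. \<bar>f y - q\<bar>) / h) \<longlongrightarrow> \<bar>f x - q\<bar>) (at_right 0))"]
    by blast
  show ?thesis
  proof (rule that)
    show "negligible (\<Union> (NQ ` \<rat>))"
      using NQ by (intro negligible_countable_Union countable_image countable_rat) auto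
    show "right_lebesgue_point f x" if "x \<notin> \<Union> (NQ ` \<rat>)" for x
      using that NQ by (intro right_lebesgue_point_of_rational_averages int) auto
  qed
qed

lemma kernel_average_diff_eq_plateau:
  assumes wd: "weak_deriv \<psi> g" and h: "0 < h" and ab: "a \<le> b"
  shows "kernel_average \<psi> a h - kernel_average \<psi> b h =
    - (\<integral>y. g y * smooth_plateau a b h y \<partial>lborel)"
proof -
  have \<psi>_int: "\<And>a b. set_integrable lborel {a..b} \<psi>"
    and by_parts: "\<And>\<phi>. test_fun \<phi> \<Longrightarrow>
      (\<integral>y. \<psi> y * deriv \<phi> y \<partial>lborel) = - (\<integral>y. g y * \<phi> y \<partial>lborel)"
    using wd set_integrable_Icc_of_loc_integrable unfolding weak_deriv_def by auto
  have "(\<integral>y. \<psi> y * deriv (smooth_plateau a b h) y \<partial>lborel) =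
      (\<integral>y. \<psi> y * bump_kernel a h y - \<psi> y * bump_kernel b h y \<partial>lborel)"
    using DERIV_imp_deriv[OF smooth_plateau_DERIV[OF h]] by (simp add: right_diff_distrib)
  also have "\<dots> = kernel_average \<psi> a h - kernel_average \<psi> b h"
    unfolding kernel_average_def
    by (intro Bochner_Integration.integral_diff integrable_mult_bump_kernel \<psi>_int h)
  finally show ?thesis using by_parts[OF test_fun_smooth_plateau[OF h ab]] by simp
qed

lemma integral_mult_smooth_plateau_tendsto:
  fixes g :: "real \<Rightarrow> real"
  assumes g_int: "\<And>a b. set_integrable lborel {a..b} g" and ab: "a < b"
  shows "(\<lambda>n. \<integral>y. g y * smooth_plateau a b (1 / Suc n) y \<partial>lborel) \<longlonglongrightarrow> integral {a..b} g"
proof -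
  let ?h = "\<lambda>n. 1 / real (Suc n)"
  \<comment> \<open>Restricting g to [a, b+1] changes none of the integrals and makes it integrable.\<close>
  define G where "G y = indicator {a..b+1} y *\<^sub>R g y" for y
  have G: "integrable lborel G" using g_int unfolding set_integrable_def G_def .
  have [measurable]: "G \<in> borel_measurable borel"
    using borel_measurable_integrable[OF G] by simp
  have same: "g y * smooth_plateau a b (?h n) y = G y * smooth_plateau a b (?h n) y" for n y
  proof (cases "y \<in> {a..b+1}")
    case False
    moreover have "b + ?h n \<le> b + 1" by simp
    ultimately have "y \<notin> {a..b + ?h n}" by (meson atLeastAtMost_iff order_trans)
    then show ?thesis using smooth_plateau_eq_0 ab by simp
  qed (simp add: G_def)
  have "(\<lambda>n. \<integral>y. G y * smooth_plateau a b (?h n) y \<partial>lborel) \<longlonglongrightarrow>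
      (\<integral>y. G y * indicator {a<..b} y \<partial>lborel)"
  proof (rule integral_dominated_convergence[where w="\<lambda>y. \<bar>G y\<bar>"])
    show "AE y in lborel. (\<lambda>n. G y * smooth_plateau a b (?h n) y) \<longlonglongrightarrow> G y * indicator {a<..b} y"
      by (intro AE_I2 tendsto_mult tendsto_const smooth_plateau_tendsto_indicator ab)
    show "AE y in lborel. norm (G y * smooth_plateau a b (?h n) y) \<le> \<bar>G y\<bar>" for n
      using smooth_plateau_bound[of a b "?h n"]
      by (intro AE_I2) (auto simp: abs_mult intro: mult_left_le)
  qed (use G in auto)
  moreover have "(\<integral>y. G y * indicator {a<..b} y \<partial>lborel) = (\<integral>y. indicator {a..b} y *\<^sub>R g y \<partial>lborel)"
  proof (rule integral_cong_AE)
    show "(\<lambda>y. G y * indicator {a<..b} y) \<in> borel_measurable lborel" by measurable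
    show "(\<lambda>y. indicator {a..b} y *\<^sub>R g y) \<in> borel_measurable lborel"
      using g_int[of a b] unfolding set_integrable_def by (rule borel_measurable_integrable)
    show "AE y in lborel. G y * indicator {a<..b} y = indicator {a..b} y *\<^sub>R g y"
      using AE_lborel_singleton[of a] by eventually_elim (auto simp: G_def indicator_def)
  qed
  moreover have "\<dots> = integral {a..b} g"
    using set_borel_integral_eq_integral(2)[OF g_int] by (simp add: set_lebesgue_integral_def)
  ultimately show ?thesis by (simp only: same)
qed

theorem weak_deriv_integral_eq:
  assumes wd: "weak_deriv \<psi> g"
    and a: "right_lebesgue_point \<psi> a" and b: "right_lebesgue_point \<psi> b" and ab: "a < b"
  shows "\<psi> b - \<psi> a = integral {a..b} g"
proof -
  let ?h = "\<lambda>n. 1 / real (Suc n)"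
  have \<psi>_int: "\<And>a b. set_integrable lborel {a..b} \<psi>"
    and g_int: "\<And>a b. set_integrable lborel {a..b} g"
    using wd set_integrable_Icc_of_loc_integrable unfolding weak_deriv_def by auto
  have "filterlim ?h (at_right 0) sequentially"
    by (intro tendsto_imp_filterlim_at_right LIMSEQ_Suc[OF lim_inverse_n'] always_eventually) simp
  then have "(\<lambda>n. kernel_average \<psi> a (?h n) - kernel_average \<psi> b (?h n)) \<longlonglongrightarrow> \<psi> a - \<psi> b"
    by (intro tendsto_diff filterlim_compose[OF kernel_average_tendsto] \<psi>_int a b)
  moreover have "(\<lambda>n. kernel_average \<psi> a (?h n) - kernel_average \<psi> b (?h n)) \<longlonglongrightarrow> - integral {a..b} g"
    using kernel_average_diff_eq_plateau[OF wd _ less_imp_le[OF ab]]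
      tendsto_minus[OF integral_mult_smooth_plateau_tendsto[OF g_int ab]]
    by simp
  ultimately have "\<psi> a - \<psi> b = - integral {a..b} g" by (rule LIMSEQ_unique)
  then show ?thesis by simp
qed

lemma weak_deriv_ae_eq_primitive:
  assumes wd: "weak_deriv \<psi> g"
  obtains N where "negligible N"
    "\<And>a x. a \<notin> N \<Longrightarrow> x \<notin> N \<Longrightarrow> a \<le> x \<Longrightarrow> \<psi> x = \<psi> a + integral {a..x} g"
proof -
  obtain N where N: "negligible N" and leb: "\<And>x. x \<notin> N \<Longrightarrow> right_lebesgue_point \<psi> x"
    using ae_right_lebesgue_point[OF set_integrable_Icc_of_loc_integrable] wd
    unfolding weak_deriv_def by blast
  show ?thesis
  proof (rule that[OF N])
    fix a x assume a: "a \<notin> N" and x: "x \<notin> N" and "a \<le> x"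
    show "\<psi> x = \<psi> a + integral {a..x} g"
    proof (cases "a = x")
      case False
      with \<open>a \<le> x\<close> have "a < x" by simp
      from weak_deriv_integral_eq[OF wd leb[OF a] leb[OF x] this] show ?thesis by simp
    qed simp
  qed
qed

section \<open>Crossing dyadic bands\<close>

lemma first_point_below:
  fixes v :: "real \<Rightarrow> real"
  assumes cont: "continuous_on {p..q} v" and "p \<le> q" "v q \<le> B"
  obtains \<beta> where "p \<le> \<beta>" "\<beta> \<le> q" "v \<beta> \<le> B" "\<And>x. p \<le> x \<Longrightarrow> x < \<beta> \<Longrightarrow> B < v x"
proof -
  define S where "S = {p..q} \<inter> v -` {..B}"
  have "closed S" unfolding S_def by (intro continuous_closed_preimage cont) auto
  moreover have "q \<in> S" using assms by (auto simp: S_def)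
  moreover have "bdd_below S" unfolding S_def by (auto intro: bdd_belowI[of _ p])
  ultimately have "Inf S \<in> S" "Inf S \<le> q" using closed_contains_Inf cInf_lower by blast+
  show ?thesis
  proof (rule that[of "Inf S"])
    show "p \<le> Inf S" "v (Inf S) \<le> B" using \<open>Inf S \<in> S\<close> by (auto simp: S_def)
    show "B < v x" if "p \<le> x" "x < Inf S" for x
    proof (rule ccontr)
      assume "\<not> B < v x"
      then have "x \<in> S" using that \<open>Inf S \<le> q\<close> by (auto simp: S_def)
      then show False using cInf_lower[OF _ \<open>bdd_below S\<close>] that by fastforce
    qed
  qed fact
qed

lemma last_point_above:
  fixes v :: "real \<Rightarrow> real"
  assumes cont: "continuous_on {p..q} v" and "p \<le> q" "A \<le> v p"
  obtains \<alpha> where "p \<le> \<alpha>" "\<alpha> \<le> q" "A \<le> v \<alpha>" "\<And>x. \<alpha> < x \<Longrightarrow> x \<le> q \<Longrightarrow> v x < A"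
proof -
  define S where "S = {p..q} \<inter> v -` {A..}"
  have "closed S" unfolding S_def by (intro continuous_closed_preimage cont) auto
  moreover have "p \<in> S" using assms by (auto simp: S_def)
  moreover have "bdd_above S" unfolding S_def by (auto intro: bdd_aboveI[of _ q])
  ultimately have "Sup S \<in> S" "p \<le> Sup S" using closed_contains_Sup cSup_upper by blast+
  show ?thesis
  proof (rule that[of "Sup S"])
    show "Sup S \<le> q" "A \<le> v (Sup S)" using \<open>Sup S \<in> S\<close> by (auto simp: S_def)
    show "v x < A" if "Sup S < x" "x \<le> q" for x
    proof (rule ccontr)
      assume "\<not> v x < A"
      then have "x \<in> S" using that \<open>p \<le> Sup S\<close> by (auto simp: S_def)
      then show False using cSup_upper[OF _ \<open>bdd_above S\<close>] that by fastforce
    qed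
  qed fact
qed

lemma band_crossing:
  fixes u :: "real \<Rightarrow> real"
  assumes cont: "continuous_on {p..q} u" and pq: "p \<le> q"
    and up: "A \<le> \<bar>u p\<bar>" and uq: "\<bar>u q\<bar> \<le> B" and BA: "B < A"
  obtains \<alpha> \<beta> where "p \<le> \<alpha>" "\<alpha> < \<beta>" "\<beta> \<le> q" "A \<le> \<bar>u \<alpha>\<bar>" "\<bar>u \<beta>\<bar> \<le> B"
    "\<And>x. \<alpha> < x \<Longrightarrow> x < \<beta> \<Longrightarrow> B < \<bar>u x\<bar> \<and> \<bar>u x\<bar> < A"
proof -
  have cont_abs: "continuous_on {p..q} (\<lambda>x. \<bar>u x\<bar>)" by (intro continuous_intros cont)
  obtain \<beta> where \<beta>: "p \<le> \<beta>" "\<beta> \<le> q" "\<bar>u \<beta>\<bar> \<le> B" "\<And>x. p \<le> x \<Longrightarrow> x < \<beta> \<Longrightarrow> B < \<bar>u x\<bar>"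
    using first_point_below[OF cont_abs pq uq] by blast
  have cont_abs': "continuous_on {p..\<beta>} (\<lambda>x. \<bar>u x\<bar>)"
    by (rule continuous_on_subset[OF cont_abs]) (use \<beta> in auto)
  obtain \<alpha> where \<alpha>: "p \<le> \<alpha>" "\<alpha> \<le> \<beta>" "A \<le> \<bar>u \<alpha>\<bar>" "\<And>x. \<alpha> < x \<Longrightarrow> x \<le> \<beta> \<Longrightarrow> \<bar>u x\<bar> < A"
    using last_point_above[OF cont_abs' \<beta>(1) up] by blast
  have "\<alpha> \<noteq> \<beta>" using \<alpha>(3) \<beta>(3) BA by auto
  show ?thesis
    by (rule that[OF \<alpha>(1) _ \<beta>(2) \<alpha>(3) \<beta>(3)]) (use \<alpha> \<beta> \<open>\<alpha> \<noteq> \<beta>\<close> in auto)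
qed

lemma cost_half_band:
  fixes c :: "real \<Rightarrow> real"
  assumes z_noninc: "\<forall>x y. 0 < x \<longrightarrow> x \<le> y \<longrightarrow> c y / y \<le> c x / x"
    and "0 \<le> c s" "0 < t" "t \<le> s" "s \<le> 2 * t"
  shows "c s \<le> 2 * c t"
proof -
  have zs: "c s / s \<le> c t / t" using z_noninc assms by auto
  have "c s = s * (c s / s)" using assms by simp
  also have "\<dots> \<le> s * (c t / t)" using zs assms by (intro mult_left_mono) auto
  also have "\<dots> \<le> 2 * t * (c t / t)"
  proof (rule mult_right_mono)
    have "0 \<le> c s / s" using assms by simp
    then show "0 \<le> c t / t" using zs by linarith
  qed (use assms in simp)
  also have "\<dots> = 2 * c t" using assms by simp
  finally show ?thesis .
qed

lemma young_band_bound: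
  fixes c :: "real \<Rightarrow> real"
  assumes c_nonneg: "\<forall>x\<ge>0. 0 \<le> c x"
    and z_noninc: "\<forall>x y. 0 < x \<longrightarrow> x \<le> y \<longrightarrow> c y / y \<le> c x / x"
    and t: "0 < t" "t \<le> s" "s \<le> 2 * t"
  shows "sqrt (c s) * \<bar>d\<bar> \<le> 1/2 * d ^ 2 + c t"
proof -
  have "0 \<le> c s" using c_nonneg t by simp
  then have "c s \<le> 2 * c t" using cost_half_band[OF z_noninc _ t] by blast
  moreover have "2 * (\<bar>d\<bar> * sqrt (c s)) \<le> \<bar>d\<bar>\<^sup>2 + (sqrt (c s))\<^sup>2"
    using sum_squares_bound[of "\<bar>d\<bar>" "sqrt (c s)"] by (simp add: mult.assoc)
  ultimately show ?thesis using \<open>0 \<le> c s\<close> by (simp add: mult.commute)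
qed

lemma dyadic_crossings:
  fixes u :: "real \<Rightarrow> real"
  assumes m: "0 < m" "m \<le> \<bar>u p\<bar>"
    and u_cont: "\<And>q. continuous_on {p..q} u"
    and u_small: "\<And>e. 0 < e \<Longrightarrow> \<exists>q\<ge>p. \<bar>u q\<bar> < e"
  obtains \<alpha> \<beta> where "\<And>k. p \<le> \<alpha> k" "\<And>k. \<alpha> k < \<beta> k"
    "\<And>k. m / 2 ^ k \<le> \<bar>u (\<alpha> k)\<bar>" "\<And>k. \<bar>u (\<beta> k)\<bar> \<le> m / 2 ^ Suc k"
    "\<And>k x. \<alpha> k < x \<Longrightarrow> x < \<beta> k \<Longrightarrow> m / 2 ^ Suc k < \<bar>u x\<bar> \<and> \<bar>u x\<bar> < m / 2 ^ k"
proof -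
  have "\<exists>\<alpha> \<beta>. p \<le> \<alpha> \<and> \<alpha> < \<beta> \<and> m / 2 ^ k \<le> \<bar>u \<alpha>\<bar> \<and> \<bar>u \<beta>\<bar> \<le> m / 2 ^ Suc k \<and>
      (\<forall>x. \<alpha> < x \<longrightarrow> x < \<beta> \<longrightarrow> m / 2 ^ Suc k < \<bar>u x\<bar> \<and> \<bar>u x\<bar> < m / 2 ^ k)" for k
  proof -
    have "0 < m / 2 ^ Suc k" using m by simp
    then obtain q where q: "p \<le> q" "\<bar>u q\<bar> < m / 2 ^ Suc k" using u_small by blast
    have "m / 2 ^ k \<le> m" using m by (simp add: divide_le_eq)
    then have "m / 2 ^ k \<le> \<bar>u p\<bar>" using m by linarith
    moreover have "m / 2 ^ Suc k < m / 2 ^ k" using m by (simp add: divide_strict_left_mono)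
    ultimately show ?thesis
      using band_crossing[OF u_cont q(1), of "m / 2 ^ k" "m / 2 ^ Suc k"] q(2)
      by (metis less_imp_le)
  qed
  then show ?thesis using that by metis
qed

lemma dyadic_band_sum_le:
  fixes c u g :: "real \<Rightarrow> real" and f :: "real \<Rightarrow> ennreal"
  assumes c_nonneg: "\<forall>x\<ge>0. 0 \<le> c x"
    and z_noninc: "\<forall>x y. 0 < x \<longrightarrow> x \<le> y \<longrightarrow> c y / y \<le> c x / x"
    and m: "0 < m" "m \<le> \<bar>u p\<bar>"
    and u_cont: "\<And>q. continuous_on {p..q} u"
    and u_incr: "\<And>a b. p \<le> a \<Longrightarrow> a \<le> b \<Longrightarrow> u b - u a = integral {a..b} g"
    and g_int: "\<And>a b. set_integrable lborel {a..b} g"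
    and u_small: "\<And>e. 0 < e \<Longrightarrow> \<exists>q\<ge>p. \<bar>u q\<bar> < e"
    and f: "AE x in lborel. p \<le> x \<longrightarrow> ennreal (1/2 * g x ^ 2 + c \<bar>u x\<bar>) \<le> f x"
  shows "(\<Sum>k. ennreal (m / 2 ^ Suc k * sqrt (c (m / 2 ^ k)))) \<le> (\<integral>\<^sup>+x. f x \<partial>lborel)"
proof -
  define s where "s k = m / 2 ^ k" for k :: nat
  define sc where "sc k = sqrt (c (s k))" for k
  obtain \<alpha> \<beta> where \<alpha>\<beta>: "\<And>k. p \<le> \<alpha> k" "\<And>k. \<alpha> k < \<beta> k" "\<And>k. s k \<le> \<bar>u (\<alpha> k)\<bar>"
      "\<And>k. \<bar>u (\<beta> k)\<bar> \<le> s (Suc k)"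
    and band: "\<And>k x. \<alpha> k < x \<Longrightarrow> x < \<beta> k \<Longrightarrow> s (Suc k) < \<bar>u x\<bar> \<and> \<bar>u x\<bar> < s k"
    using dyadic_crossings[OF m u_cont u_small] unfolding s_def by blast
  define I where "I k = {\<alpha> k<..<\<beta> k}" for k
  have s_pos: "0 < s k" for k using m by (simp add: s_def)
  have sc_nonneg: "0 \<le> sc k" for k using c_nonneg s_pos[of k] by (simp add: sc_def)
  have disjoint: "I k \<inter> I j = {}" if "k < j" for k j
  proof -
    have "s j \<le> s (Suc k)"
      unfolding s_def using m that by (intro divide_left_mono power_increasing) auto
    then have "x \<notin> I j" if "x \<in> I k" for x
      using band[of k x] band[of j x] that by (auto simp: I_def)
    then show ?thesis by blast
  qed
  have band_bound: "ennreal (s (Suc k) * sc k) \<le>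
      (\<integral>\<^sup>+x. indicator (I k) x * ennreal (sc k * \<bar>g x\<bar>) \<partial>lborel)" for k
  proof -
    have "s (Suc k) \<le> \<bar>u (\<beta> k) - u (\<alpha> k)\<bar>" using \<alpha>\<beta>[of k] by (simp add: s_def)
    also have "\<dots> = \<bar>integral {\<alpha> k..\<beta> k} g\<bar>" using u_incr \<alpha>\<beta>(1,2)[of k] by simp
    finally have "ennreal (s (Suc k) * sc k) \<le> ennreal (sc k * \<bar>integral {\<alpha> k..\<beta> k} g\<bar>)"
      using sc_nonneg[of k] by (intro ennreal_leI) (simp add: mult.commute mult_left_mono)
    also have "\<dots> \<le> (\<integral>\<^sup>+x. indicator (I k) x * ennreal (sc k * \<bar>g x\<bar>) \<partial>lborel)"
      unfolding I_def by (intro abs_integral_le_nn_integral_abs g_int sc_nonneg)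
    finally show ?thesis .
  qed
  have pointwise: "sc k * \<bar>g x\<bar> \<le> 1/2 * g x ^ 2 + c \<bar>u x\<bar>" if "x \<in> I k" for k x
    using band[of k x] that s_pos[of "Suc k"] unfolding sc_def I_def
    by (intro young_band_bound[OF c_nonneg z_noninc]) (auto simp: s_def)
  have [measurable]: "g \<in> borel_measurable lborel"
    by (rule borel_measurable_of_set_integrable_Icc[OF g_int])
  have term_nonneg: "0 \<le> s (Suc k) * sc k" for k
    using s_pos[of "Suc k"] sc_nonneg[of k] by simp
  have "ennreal (\<Sum>k<n. s (Suc k) * sc k) \<le> (\<integral>\<^sup>+x. f x \<partial>lborel)" for n
  proof -
    have "ennreal (\<Sum>k<n. s (Suc k) * sc k) = (\<Sum>k<n. ennreal (s (Suc k) * sc k))"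
      using term_nonneg by (simp add: sum_ennreal)
    also have "\<dots> \<le> (\<Sum>k<n. \<integral>\<^sup>+x. indicator (I k) x * ennreal (sc k * \<bar>g x\<bar>) \<partial>lborel)"
      by (intro sum_mono band_bound)
    also have "\<dots> \<le> (\<integral>\<^sup>+x. f x \<partial>lborel)"
    proof (rule sum_nn_integral_disjoint_le)
      show "I k \<inter> I j = {}" if "k \<noteq> j" for k j
        using disjoint[of k j] disjoint[of j k] that by (cases "k < j") (auto simp: Int_commute)
      show "AE x in lborel. \<forall>k. x \<in> I k \<longrightarrow> ennreal (sc k * \<bar>g x\<bar>) \<le> f x"
        using f
      proof eventually_elim
        case (elim x)
        show ?case
        proof (intro allI impI)
          fix k assume "x \<in> I k"
          then have "p \<le> x" using \<alpha>\<beta>(1)[of k] by (auto simp: I_def)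
          with elim pointwise[OF \<open>x \<in> I k\<close>] show "ennreal (sc k * \<bar>g x\<bar>) \<le> f x"
            by (auto intro: order.trans[OF ennreal_leI])
        qed
      qed
    qed (auto simp: I_def)
    finally show ?thesis .
  qed
  moreover have "m / 2 ^ Suc k * sqrt (c (m / 2 ^ k)) = s (Suc k) * sc k" for k
    by (simp add: s_def sc_def)
  ultimately show ?thesis
    unfolding suminf_eq_SUP using term_nonneg by (intro SUP_least) (simp add: sum_ennreal)
qed

lemma dyadic_sum_le_energy:
  fixes c \<psi> g :: "real \<Rightarrow> real"
  assumes c_nonneg: "\<forall>x\<ge>0. 0 \<le> c x"
    and z_noninc: "\<forall>x y. 0 < x \<longrightarrow> x \<le> y \<longrightarrow> c y / y \<le> c x / x"
    and \<psi>: "integrable lborel \<psi>" and nonzero: "\<not> (AE x in lborel. \<psi> x = 0)"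
    and wd: "weak_deriv \<psi> g"
  obtains m where "0 < m"
    "(\<Sum>k. ennreal (m / 2 ^ Suc k * sqrt (c (m / 2 ^ k)))) \<le>
       (\<integral>\<^sup>+x. ennreal (1/2 * g x ^ 2 + c \<bar>\<psi> x\<bar>) \<partial>lborel)"
proof -
  have g_int: "\<And>a b. set_integrable lborel {a..b} g"
    using wd set_integrable_Icc_of_loc_integrable unfolding weak_deriv_def by auto
  obtain N where N: "negligible N"
    and primitive: "\<And>a x. a \<notin> N \<Longrightarrow> x \<notin> N \<Longrightarrow> a \<le> x \<Longrightarrow> \<psi> x = \<psi> a + integral {a..x} g"
    using weak_deriv_ae_eq_primitive[OF wd] by blast
  have "\<exists>y0. y0 \<notin> N \<and> \<psi> y0 \<noteq> 0"
  proof (rule ccontr)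
    assume none: "\<not> ?thesis"
    have "AE x in lborel. \<psi> x = 0"
      using AE_not_in_negligible[OF N] by eventually_elim (use none in blast)
    with nonzero show False ..
  qed
  then obtain y0 where y0: "y0 \<notin> N" "\<psi> y0 \<noteq> 0" by blast
  define u where "u x = \<psi> y0 + integral {y0..x} g" for x
  have u_eq: "\<psi> x = u x" if "x \<notin> N" "y0 \<le> x" for x
    using primitive[OF y0(1) that] by (simp add: u_def)
  have g_integrable_on: "g integrable_on {a..b}" for a b
    using set_borel_integral_eq_integral(1)[OF g_int] .
  have u_incr: "u b - u a = integral {a..b} g" if "y0 \<le> a" "a \<le> b" for a b
    using Henstock_Kurzweil_Integration.integral_combine[OF that g_integrable_on]
    by (simp add: u_def)
  have m: "0 < \<bar>u y0\<bar>" using y0 by (simp add: u_def)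
  have u_cont: "continuous_on {y0..q} u" for q
    unfolding u_def by (intro continuous_intros indefinite_integral_continuous_1 g_integrable_on)
  have u_small: "\<exists>q\<ge>y0. \<bar>u q\<bar> < e" if e: "0 < e" for e
  proof -
    obtain y where "y0 < y" "y \<notin> N" "\<bar>\<psi> y\<bar> < e"
      using integrable_small_values_beyond[OF \<psi> N e] by blast
    then show ?thesis using u_eq[of y] by (intro exI[of _ y]) auto
  qed
  have energy_density: "AE x in lborel. y0 \<le> x \<longrightarrow>
      ennreal (1/2 * g x ^ 2 + c \<bar>u x\<bar>) \<le> ennreal (1/2 * g x ^ 2 + c \<bar>\<psi> x\<bar>)"
    using AE_not_in_negligible[OF N] by eventually_elim (simp add: u_eq)
  show ?thesis
    using dyadic_band_sum_le[OF c_nonneg z_noninc m order.refl u_cont u_incr g_int u_small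
        energy_density]
    by (rule that[OF m])
qed

section \<open>Consequences for the cost near zero\<close>

lemma dyadic_band_exists:
  fixes m \<phi> :: real
  assumes "0 < \<phi>" "\<phi> \<le> m"
  shows "\<exists>k. m / 2 ^ Suc k < \<phi> \<and> \<phi> \<le> m / 2 ^ k"
proof -
  have ex: "\<exists>n. m / 2 ^ n < \<phi>"
  proof -
    obtain n where "m / \<phi> < 2 ^ n" using real_arch_pow[of 2 "m / \<phi>"] by auto
    then show ?thesis using assms by (intro exI[of _ n]) (simp add: field_simps)
  qed
  define n where "n = (LEAST n. m / 2 ^ n < \<phi>)"
  have n: "m / 2 ^ n < \<phi>" unfolding n_def by (rule LeastI_ex[OF ex])
  have "n \<noteq> 0"
  proof
    assume "n = 0"
    with n assms show False by simp
  qed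
  then obtain k where k: "n = Suc k" using not0_implies_Suc by blast
  have "\<not> m / 2 ^ k < \<phi>" using not_less_Least[of k "\<lambda>n. m / 2 ^ n < \<phi>"] k unfolding n_def by simp
  then show ?thesis using n k by (intro exI[of _ k]) simp
qed

lemma sqrt_cost_le_dyadic_step:
  fixes c :: "real \<Rightarrow> real"
  assumes c_nonneg: "\<forall>x\<ge>0. 0 \<le> c x" and c0: "c 0 = 0"
    and z_noninc: "\<forall>x y. 0 < x \<longrightarrow> x \<le> y \<longrightarrow> c y / y \<le> c x / x"
    and m: "0 < m"
  shows "ennreal (sqrt (c \<phi>)) * indicator {0..1} \<phi> \<le>
    (\<Sum>k. ennreal (sqrt (2 * c (m / 2 ^ Suc k))) * indicator {m / 2 ^ Suc k<..m / 2 ^ k} \<phi>) +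
    ennreal (sqrt (c m / m)) * indicator {m<..1} \<phi>"
proof (cases "0 < \<phi> \<and> \<phi> \<le> 1")
  case True
  show ?thesis
  proof (cases "\<phi> \<le> m")
    case True
    then obtain k where k: "m / 2 ^ Suc k < \<phi>" "\<phi> \<le> m / 2 ^ k"
      using dyadic_band_exists[of \<phi> m] \<open>0 < \<phi> \<and> \<phi> \<le> 1\<close> by auto
    let ?F = "\<lambda>k. ennreal (sqrt (2 * c (m / 2 ^ Suc k))) * indicator {m / 2 ^ Suc k<..m / 2 ^ k} \<phi>"
    have "0 \<le> c \<phi>" using c_nonneg \<open>0 < \<phi> \<and> \<phi> \<le> 1\<close> by simp
    moreover have "0 < m / 2 ^ Suc k" using m by simp
    moreover have "m / 2 ^ Suc k \<le> \<phi>" "\<phi> \<le> 2 * (m / 2 ^ Suc k)" using k by auto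
    ultimately have "c \<phi> \<le> 2 * c (m / 2 ^ Suc k)"
      by (rule cost_half_band[OF z_noninc])
    then have "ennreal (sqrt (c \<phi>)) \<le> ?F k"
      using k by (auto intro!: ennreal_leI)
    also have "\<dots> \<le> suminf ?F"
      by (rule ennreal_le_suminf)
    finally show ?thesis using \<open>0 < \<phi> \<and> \<phi> \<le> 1\<close> by (simp add: add_increasing2)
  next
    case False
    then have "c \<phi> / \<phi> \<le> c m / m" using z_noninc m by auto
    then have "c \<phi> \<le> \<phi> * (c m / m)" using True by (simp add: field_simps)
    also have "\<dots> \<le> c m / m"
      using True c_nonneg m by (intro mult_left_le_one_le) auto
    finally have "ennreal (sqrt (c \<phi>)) \<le> ennreal (sqrt (c m / m))"
      by (intro ennreal_leI) simp
    then show ?thesis using True False by (simp add: add_increasing)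
  qed
next
  case False
  then have "\<phi> = 0 \<or> \<phi> \<notin> {0..1}" by auto
  then show ?thesis using c0 by auto
qed

lemma nn_integral_sqrt_cost_finite:
  fixes c :: "real \<Rightarrow> real"
  assumes c_nonneg: "\<forall>x\<ge>0. 0 \<le> c x" and c0: "c 0 = 0"
    and z_noninc: "\<forall>x y. 0 < x \<longrightarrow> x \<le> y \<longrightarrow> c y / y \<le> c x / x"
    and m: "0 < m" and summable: "summable (\<lambda>k. m / 2 ^ Suc k * sqrt (c (m / 2 ^ k)))"
  shows "(\<integral>\<^sup>+\<phi>\<in>{0..1}. ennreal (sqrt (c \<phi>)) \<partial>lborel) < \<infinity>"
proof -
  define s where "s k = m / 2 ^ k" for k :: nat
  define J where "J k = {s (Suc k)<..s k}" for k
  define b where "b k = sqrt (2 * c (s (Suc k)))" for k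
  define zm where "zm = sqrt (c m / m)"
  define F where "F \<phi> = (\<Sum>k. ennreal (b k) * indicator (J k) \<phi>) + ennreal zm * indicator {m<..1} \<phi>"
    for \<phi> :: real
  have "(\<integral>\<^sup>+\<phi>\<in>{0..1}. ennreal (sqrt (c \<phi>)) \<partial>lborel) \<le> (\<integral>\<^sup>+\<phi>. F \<phi> \<partial>lborel)"
    using sqrt_cost_le_dyadic_step[OF c_nonneg c0 z_noninc m]
    by (intro nn_integral_mono) (simp add: F_def b_def J_def s_def zm_def)
  also have "\<dots> = (\<Sum>k. ennreal (b k * (s k - s (Suc k)))) + ennreal zm * emeasure lborel {m<..1}"
  proof -
    have "(\<integral>\<^sup>+\<phi>. ennreal (b k) * indicator (J k) \<phi> \<partial>lborel) =
        ennreal (b k * (s k - s (Suc k)))" for k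
    proof -
      have "0 \<le> b k" using c_nonneg m by (simp add: b_def s_def)
      moreover have "s (Suc k) \<le> s k" unfolding s_def using m by (intro divide_left_mono) auto
      ultimately show ?thesis by (simp add: nn_integral_cmult_indicator J_def ennreal_mult)
    qed
    moreover have "(\<integral>\<^sup>+\<phi>. F \<phi> \<partial>lborel) =
        (\<integral>\<^sup>+\<phi>. (\<Sum>k. ennreal (b k) * indicator (J k) \<phi>) \<partial>lborel) +
        (\<integral>\<^sup>+\<phi>. ennreal zm * indicator {m<..1} \<phi> \<partial>lborel)"
      unfolding F_def J_def by (rule nn_integral_add) measurable
    moreover have "(\<integral>\<^sup>+\<phi>. (\<Sum>k. ennreal (b k) * indicator (J k) \<phi>) \<partial>lborel) =
        (\<Sum>k. \<integral>\<^sup>+\<phi>. ennreal (b k) * indicator (J k) \<phi> \<partial>lborel)"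
      by (rule nn_integral_suminf) (simp add: J_def)
    ultimately show ?thesis by (simp add: nn_integral_cmult_indicator)
  qed
  also have "\<dots> < \<infinity>"
  proof -
    define t where "t k = m / 2 ^ Suc k * sqrt (c (m / 2 ^ k))" for k
    have "b k * (s k - s (Suc k)) = 2 * sqrt 2 * t (Suc k)" for k
      by (simp add: b_def s_def t_def real_sqrt_mult)
    moreover have "summable (\<lambda>k. 2 * sqrt 2 * t (Suc k))"
      using summable_ignore_initial_segment[OF summable, of 1]
      by (intro summable_mult) (simp add: t_def)
    moreover have "0 \<le> 2 * sqrt 2 * t (Suc k)" for k
      using c_nonneg m by (simp add: t_def)
    ultimately have "(\<Sum>k. ennreal (b k * (s k - s (Suc k)))) \<noteq> \<infinity>"
      by (simp add: ennreal_suminf_neq_top)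
    moreover have "emeasure lborel {m<..1::real} < \<infinity>"
      by (cases "m \<le> 1") auto
    ultimately show ?thesis by (simp add: less_top ennreal_mult_less_top)
  qed
  finally show ?thesis .
qed

lemma cost_cube_liminf_eq_0:
  fixes c :: "real \<Rightarrow> real"
  assumes c_nonneg: "\<forall>x\<ge>0. 0 \<le> c x"
    and m: "0 < m" and summable: "summable (\<lambda>k. m / 2 ^ Suc k * sqrt (c (m / 2 ^ k)))"
  shows "Liminf (at_right 0) (\<lambda>\<phi>. ereal (c \<phi> / \<phi> * \<phi> ^ 3)) = 0"
proof (rule Liminf_at_right_eq_0_of_sequence)
  define s where "s k = m / 2 ^ k" for k :: nat
  have "c (s k) / s k * s k ^ 3 = 4 * (m / 2 ^ Suc k * sqrt (c (m / 2 ^ k)))\<^sup>2" for k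
  proof -
    have summand: "m / 2 ^ Suc k * sqrt (c (m / 2 ^ k)) = s k / 2 * sqrt (c (s k))"
      by (simp add: s_def)
    have "0 < s k" "0 \<le> c (s k)" using m c_nonneg by (simp_all add: s_def)
    then show ?thesis
      unfolding summand by (simp add: power_mult_distrib power3_eq_cube power2_eq_square)
  qed
  moreover have "(\<lambda>k. 4 * (m / 2 ^ Suc k * sqrt (c (m / 2 ^ k)))\<^sup>2) \<longlonglongrightarrow> 4 * 0\<^sup>2"
    by (intro tendsto_mult tendsto_const tendsto_power summable_LIMSEQ_zero[OF summable])
  ultimately show "(\<lambda>k. c (s k) / s k * s k ^ 3) \<longlonglongrightarrow> 0" by simp
  have "s \<longlonglongrightarrow> 0" unfolding s_def by (rule LIMSEQ_divide_realpow_zero) simp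
  moreover have "\<forall>\<^sub>F k in sequentially. 0 < s k" using m by (simp add: s_def)
  ultimately show "filterlim s (at_right 0) sequentially" by (rule tendsto_imp_filterlim_at_right)
  have "0 \<le> c \<phi> / \<phi> * \<phi> ^ 3" if "0 < \<phi>" for \<phi>
    using c_nonneg that by simp
  with eventually_at_right_less[of "0::real"]
  show "\<forall>\<^sub>F \<phi> in at_right 0. 0 \<le> c \<phi> / \<phi> * \<phi> ^ 3"
    by (auto elim: eventually_mono)
qed

lemma induced_cost_less_top_witness:
  assumes "induced_cost c w < \<infinity>"
  obtains \<psi> g where "integrable lborel \<psi>" "(\<integral>y. \<psi> y \<partial>lborel) = w" "weak_deriv \<psi> g"
    "(\<integral>\<^sup>+y. ennreal (1/2 * g y ^ 2 + c \<bar>\<psi> y\<bar>) \<partial>lborel) < \<infinity>"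
proof -
  obtain \<psi> where \<psi>: "integrable lborel \<psi>" "(\<integral>y. \<psi> y \<partial>lborel) = w" and finite: "energy c \<psi> < \<infinity>"
    using assms unfolding induced_cost_def by (auto simp: INF_less_iff)
  have ex: "\<exists>g. weak_deriv \<psi> g"
  proof (rule ccontr)
    assume "\<not> ?thesis"
    then have "energy c \<psi> = \<infinity>" by (simp add: energy_def)
    with finite show False by simp
  qed
  show ?thesis
  proof (rule that[OF \<psi>])
    show "weak_deriv \<psi> (SOME g. weak_deriv \<psi> g)" using ex by (rule someI_ex)
    show "(\<integral>\<^sup>+y. ennreal (1/2 * (SOME g. weak_deriv \<psi> g) y ^ 2 + c \<bar>\<psi> y\<bar>) \<partial>lborel) < \<infinity>"
      using finite ex by (simp add: energy_def)
  qed
qed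

theorem mainTheorem7:
  fixes c \<tau> :: "real \<Rightarrow> real"
  assumes c_nonneg: "\<forall>x\<ge>0. c x \<ge> 0"
    and c0: "c 0 = 0"
    and z_noninc: "\<forall>x y. 0 < x \<longrightarrow> x \<le> y \<longrightarrow> c y / y \<le> c x / x"
    and induced: "\<forall>w\<ge>0. induced_cost c w = ennreal (\<tau> w)"
    and adm: "admissible_cost \<tau>"
  shows "(\<integral>\<^sup>+ \<phi> \<in> {0..1}. ennreal (sqrt (c \<phi>)) \<partial>lborel) < \<infinity> \<and>
         Liminf (at_right 0) (\<lambda>\<phi>. ereal (c \<phi> / \<phi> * \<phi> ^ 3)) = 0"
proof -
  have "induced_cost c 1 < \<infinity>" using induced by simp
  then obtain \<psi> g where \<psi>: "integrable lborel \<psi>" "(\<integral>y. \<psi> y \<partial>lborel) = 1"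
    and wd: "weak_deriv \<psi> g" and finite: "(\<integral>\<^sup>+y. ennreal (1/2 * g y ^ 2 + c \<bar>\<psi> y\<bar>) \<partial>lborel) < \<infinity>"
    by (rule induced_cost_less_top_witness)
  have "\<not> (AE x in lborel. \<psi> x = 0)"
  proof
    assume "AE x in lborel. \<psi> x = 0"
    then have "(\<integral>y. \<psi> y \<partial>lborel) = 0" by (rule integral_eq_zero_AE)
    with \<psi>(2) show False by simp
  qed
  then obtain m where m: "0 < m"
    and bound: "(\<Sum>k. ennreal (m / 2 ^ Suc k * sqrt (c (m / 2 ^ k)))) \<le>
      (\<integral>\<^sup>+y. ennreal (1/2 * g y ^ 2 + c \<bar>\<psi> y\<bar>) \<partial>lborel)"
    by (rule dyadic_sum_le_energy[OF c_nonneg z_noninc \<psi>(1) _ wd])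
  have nonneg: "0 \<le> m / 2 ^ Suc k * sqrt (c (m / 2 ^ k))" for k
    using c_nonneg m by simp
  have summable: "summable (\<lambda>k. m / 2 ^ Suc k * sqrt (c (m / 2 ^ k)))"
    by (rule summable_suminf_not_top[OF nonneg]) (use order.strict_trans1[OF bound finite] in simp)
  show ?thesis
    using nn_integral_sqrt_cost_finite[OF c_nonneg c0 z_noninc m summable]
      cost_cube_liminf_eq_0[OF c_nonneg m summable] by blast
qed

end
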